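(* Let $(X,\le)$ be a wpo. For any downward-closed subset $F$ of $\widehat X$, $\eta_X^{-1}(cl(F))=\eta_X^{-1}(F)$.
   Context: A wpo is a partial order that is well-founded with no infinite antichain. An ideal of $X$ is a nonempty downward-closed directed subset; $\widehat X$ is the set of ideals of $X$ ordered by inclusion (a dcpo in which directed lubs are unions), and $\eta_X:X\to\widehat X$, $\eta_X(x)=\downarrow x$. $cl(F)$ is the closure of $F$ in the Scott topology of $\widehat X$ (open sets: upward-closed sets meeting every directed family whose lub they contain). *)

theory Defs
  imports "HOL-Analysis.Analysis"
begin

definition wpo_order :: "'a::order itself \<Rightarrow> bool" where
  "wpo_order _ \<longleftrightarrow> wfP ((<) :: 'a \<Rightarrow> 'a \<Rightarrow> bool) \<and>
     (\<forall>A :: 'a set. (\<forall>x\<in>A. \<forall>y\<in>A. x \<noteq> y \<longrightarrow> \<not> x \<le> y) \<longrightarrow> finite A)"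

definition is_ideal :: "'a::order set \<Rightarrow> bool" where
  "is_ideal I \<longleftrightarrow> I \<noteq> {} \<and> (\<forall>x\<in>I. \<forall>y. y \<le> x \<longrightarrow> y \<in> I) \<and>
     (\<forall>x\<in>I. \<forall>y\<in>I. \<exists>z\<in>I. x \<le> z \<and> y \<le> z)"

definition Ideals :: "'a::order set set" where
  "Ideals = {I. is_ideal I}"

definition eta :: "'a::order \<Rightarrow> 'a set" where
  "eta x = {y. y \<le> x}"

text \<open>Directed family of ideals (w.r.t. inclusion); its lub in the dcpo of ideals is its union.\<close>
definition directed_fam :: "'a set set \<Rightarrow> bool" where
  "directed_fam D \<longleftrightarrow> D \<noteq> {} \<and> (\<forall>A\<in>D. \<forall>B\<in>D. \<exists>C\<in>D. A \<subseteq> C \<and> B \<subseteq> C)"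

definition scott_open :: "'a::order set set \<Rightarrow> bool" where
  "scott_open U \<longleftrightarrow> U \<subseteq> Ideals \<and>
     (\<forall>A\<in>U. \<forall>B\<in>Ideals. A \<subseteq> B \<longrightarrow> B \<in> U) \<and>
     (\<forall>D. D \<subseteq> Ideals \<and> directed_fam D \<and> \<Union>D \<in> U \<longrightarrow> D \<inter> U \<noteq> {})"

lemma scott_open_Int:
  assumes a: "scott_open S" "scott_open T"
  shows "scott_open (S \<inter> T)"
proof -
  have s1: "S \<subseteq> Ideals" and s2: "\<forall>A\<in>S. \<forall>B\<in>Ideals. A \<subseteq> B \<longrightarrow> B \<in> S"
    and s3: "\<forall>D. D \<subseteq> Ideals \<and> directed_fam D \<and> \<Union>D \<in> S \<longrightarrow> D \<inter> S \<noteq> {}"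
    using a(1) unfolding scott_open_def by simp_all
  have t1: "T \<subseteq> Ideals" and t2: "\<forall>A\<in>T. \<forall>B\<in>Ideals. A \<subseteq> B \<longrightarrow> B \<in> T"
    and t3: "\<forall>D. D \<subseteq> Ideals \<and> directed_fam D \<and> \<Union>D \<in> T \<longrightarrow> D \<inter> T \<noteq> {}"
    using a(2) unfolding scott_open_def by simp_all
  have "\<forall>D. D \<subseteq> Ideals \<and> directed_fam D \<and> \<Union>D \<in> S \<inter> T \<longrightarrow> D \<inter> (S \<inter> T) \<noteq> {}"
  proof (intro allI impI)
    fix D assume d: "D \<subseteq> Ideals \<and> directed_fam D \<and> \<Union>D \<in> S \<inter> T"
    obtain A where A: "A \<in> D" "A \<in> S" using s3 d by blast
    obtain B where B: "B \<in> D" "B \<in> T" using t3 d by blast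
    obtain C where C: "C \<in> D" "A \<subseteq> C" "B \<subseteq> C"
      using d A(1) B(1) unfolding directed_fam_def by blast
    have CI: "C \<in> Ideals" using d C(1) by blast
    have "C \<in> S" using s2 A(2) CI C(2) by blast
    moreover have "C \<in> T" using t2 B(2) CI C(3) by blast
    ultimately show "D \<inter> (S \<inter> T) \<noteq> {}" using C(1) by blast
  qed
  moreover have "S \<inter> T \<subseteq> Ideals" using s1 by blast
  moreover have "\<forall>A\<in>S \<inter> T. \<forall>B\<in>Ideals. A \<subseteq> B \<longrightarrow> B \<in> S \<inter> T"
    using s2 t2 by blast
  ultimately show ?thesis unfolding scott_open_def by blast
qed

lemma scott_open_Union:
  assumes a: "\<forall>S\<in>K. scott_open S"
  shows "scott_open (\<Union>K)"
proof -
  have "\<Union>K \<subseteq> Ideals" using a unfolding scott_open_def by blast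
  moreover have "\<forall>A\<in>\<Union>K. \<forall>B\<in>Ideals. A \<subseteq> B \<longrightarrow> B \<in> \<Union>K"
  proof (intro ballI impI)
    fix A B assume h: "A \<in> \<Union>K" "B \<in> Ideals" "A \<subseteq> B"
    then obtain S where S: "S \<in> K" "A \<in> S" by blast
    have "\<forall>A\<in>S. \<forall>B\<in>Ideals. A \<subseteq> B \<longrightarrow> B \<in> S" using a S(1) unfolding scott_open_def by simp
    then have "B \<in> S" using S(2) h(2,3) by blast
    then show "B \<in> \<Union>K" using S(1) by blast
  qed
  moreover have "\<forall>D. D \<subseteq> Ideals \<and> directed_fam D \<and> \<Union>D \<in> \<Union>K \<longrightarrow> D \<inter> \<Union>K \<noteq> {}"
  proof (intro allI impI)
    fix D assume d: "D \<subseteq> Ideals \<and> directed_fam D \<and> \<Union>D \<in> \<Union>K"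
    then obtain S where S: "S \<in> K" "\<Union>D \<in> S" by blast
    have "\<forall>D. D \<subseteq> Ideals \<and> directed_fam D \<and> \<Union>D \<in> S \<longrightarrow> D \<inter> S \<noteq> {}"
      using a S(1) unfolding scott_open_def by simp
    then have "D \<inter> S \<noteq> {}" using d S(2) by blast
    then show "D \<inter> \<Union>K \<noteq> {}" using S(1) by blast
  qed
  ultimately show ?thesis unfolding scott_open_def by blast
qed

lemma istopology_scott_open: "istopology scott_open"
  unfolding istopology_def using scott_open_Int scott_open_Union by blast

definition scott_topology :: "'a::order set topology" where
  "scott_topology = topology scott_open"

definition scott_cl :: "'a::order set set \<Rightarrow> 'a set set" where
  "scott_cl F = scott_topology closure_of F"

end

theory Submission
  imports Defs
begin

text \<open>The set of ideals containing a fixed point x is Scott open, and it is the smallest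
  open neighbourhood of the principal ideal of x. So if that principal ideal lies in the
  closure of F, some member of F contains x, hence contains the whole principal ideal, which
  then belongs to F because F is downward closed.\<close>

lemma openin_scott_topology: "openin scott_topology = scott_open"
  unfolding scott_topology_def by (rule topology_inverse'[OF istopology_scott_open])

lemma eta_in_Ideals: "eta x \<in> Ideals"
  unfolding Ideals_def is_ideal_def eta_def mem_Collect_eq
  by (metis dual_order.trans empty_iff mem_Collect_eq order_refl)

lemma scott_open_Ideals: "scott_open Ideals"
  unfolding scott_open_def directed_fam_def by auto

lemma topspace_scott_topology: "topspace scott_topology = Ideals"
proof
  have "scott_open (topspace scott_topology)"
    using openin_topspace[of scott_topology] by (simp add: openin_scott_topology)
  then show "topspace scott_topology \<subseteq> Ideals"
    unfolding scott_open_def by (rule conjunct1)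
  show "Ideals \<subseteq> topspace scott_topology"
    using openin_subset[of scott_topology Ideals] scott_open_Ideals
    by (simp add: openin_scott_topology)
qed

lemma scott_open_Ideals_containing: "scott_open {I \<in> Ideals. x \<in> I}"
  unfolding scott_open_def by auto

lemma scott_cl_subset_Union:
  assumes "I \<in> scott_cl F"
  shows "I \<subseteq> \<Union>F"
proof
  fix x assume "x \<in> I"
  have "I \<in> Ideals"
    using closure_of_subset_topspace[of scott_topology F] assms
    unfolding scott_cl_def topspace_scott_topology by (rule subsetD)
  with \<open>x \<in> I\<close> have nbhd: "I \<in> {J \<in> Ideals. x \<in> J}" by blast
  have "openin scott_topology {J \<in> Ideals. x \<in> J}"
    by (simp add: openin_scott_topology scott_open_Ideals_containing)
  moreover have "\<forall>T. I \<in> T \<and> openin scott_topology T \<longrightarrow> (\<exists>J. J \<in> F \<and> J \<in> T)"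
    using assms unfolding scott_cl_def in_closure_of by (rule conjunct2)
  ultimately have "\<exists>J. J \<in> F \<and> J \<in> {J \<in> Ideals. x \<in> J}"
    using nbhd by (meson conjI)
  then show "x \<in> \<Union>F" by auto
qed

lemma eta_subset_ideal:
  assumes "I \<in> Ideals" "x \<in> I"
  shows "eta x \<subseteq> I"
  using assms unfolding Ideals_def is_ideal_def eta_def by blast

theorem lemma3p8:
  fixes F :: "'a::order set set"
  assumes "wpo_order TYPE('a)"
    and "F \<subseteq> Ideals"
    and "\<forall>A\<in>F. \<forall>B\<in>Ideals. B \<subseteq> A \<longrightarrow> B \<in> F"
  shows "eta -` scott_cl F = eta -` F"
proof (intro equalityI subsetI; simp)
  have "F \<subseteq> scott_cl F"
    unfolding scott_cl_def
    by (rule closure_of_subset) (simp add: assms(2) topspace_scott_topology)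
  then show "eta x \<in> scott_cl F" if "eta x \<in> F" for x
    using that by (rule subsetD)
next
  fix x assume "eta x \<in> scott_cl F"
  then have "eta x \<subseteq> \<Union>F"
    by (rule scott_cl_subset_Union)
  moreover have "x \<in> eta x"
    by (simp add: eta_def)
  ultimately obtain J where "J \<in> F" "x \<in> J"
    by auto
  with assms(2) have "J \<in> Ideals"
    by blast
  then have "eta x \<subseteq> J"
    using \<open>x \<in> J\<close> by (rule eta_subset_ideal)
  with assms(3) \<open>J \<in> F\<close> show "eta x \<in> F"
    using eta_in_Ideals by blast
qed

end
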